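(* Let $k\geq 1$. (i) Let $q$ be a prime power and $E\subset\mathbb{F}_q^2$. Then $E^{k+1}$ contains $\lesssim q^k|E|$ bad tuples. In particular, if $|E|\gtrsim q^{1+\varepsilon}$ for some constant $\varepsilon>0$, the number of bad tuples in $E^{k+1}$ is $o(|E|^{k+1})$. (ii) Let $p$ be a prime, $\ell\geq 1$, $R=\mathbb{Z}/p^\ell\mathbb{Z}$. The number of bad tuples in $(R^2)^{k+1}$ is $\lesssim p^{(2\ell-1)(k+1)+1}$. In particular, if $E\subset R^2$ satisfies $|E|\gtrsim p^{2\ell-1+\frac{1}{k+1}+\varepsilon}$ for some constant $\varepsilon>0$, then the number of bad tuples in $E^{k+1}$ is $o(|E|^{k+1})$.
   Context: For a commutative ring $R$ and $x=(x_1,x_2),y=(y_1,y_2)\in R^2$, write $y^\perp=(y_2,-y_1)$, so $x\cdot y^\perp=x_1y_2-x_2y_1$. A tuple (configuration) $x=(x^1,\dots,x^{k+1})\in(R^2)^{k+1}$ is good if there exist indices $i,j$ with $x^i\cdot x^{j\perp}$ a unit of $R$, and bad otherwise. $X\lesssim Y$ means $X\leq CY$ with $C$ independent of $q$ (resp. $p,\ell$) and $E$; $o(Y)$ denotes a quantity whose ratio to $Y$ tends to $0$ as the ring size tends to infinity. *)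

theory Defs
  imports "HOL-Algebra.Algebra" "HOL-Number_Theory.Residues" "HOL-Library.FuncSet"
begin

definition perp_dot :: "('a, 'b) ring_scheme \<Rightarrow> 'a \<times> 'a \<Rightarrow> 'a \<times> 'a \<Rightarrow> 'a" where
  "perp_dot R x y = (fst x \<otimes>\<^bsub>R\<^esub> snd y) \<ominus>\<^bsub>R\<^esub> (snd x \<otimes>\<^bsub>R\<^esub> fst y)"

definition good_config :: "('a, 'b) ring_scheme \<Rightarrow> nat \<Rightarrow> (nat \<Rightarrow> 'a \<times> 'a) \<Rightarrow> bool" where
  "good_config R k x \<longleftrightarrow> (\<exists>i\<le>k. \<exists>j\<le>k. perp_dot R (x i) (x j) \<in> Units R)"

definition bad_tuples :: "('a, 'b) ring_scheme \<Rightarrow> nat \<Rightarrow> ('a \<times> 'a) set \<Rightarrow> (nat \<Rightarrow> 'a \<times> 'a) set" where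
  "bad_tuples R k E = {x \<in> {..k} \<rightarrow>\<^sub>E E. \<not> good_config R k x}"

end

theory Submission
  imports Defs
begin

(* Choose the entries of a bad tuple one at a time. Once an entry a outside an exceptional set Z
   is fixed, every other entry b has a . b-perp a non-unit: over F_q, b lies on the line through
   the origin and a (at most q points; Z is the origin), and over Z/p^l Z one coordinate of b is
   determined mod p by the other (at most p^(2l-1) points; Z is the set of points divisible by
   p). Induction on the length bounds the bad tuples in E^(k+1) by (k+1) |E| B^k, with B the
   bound just found. For the o(|E|^(k+1)) statements, the hypothesis on |E| beats these bounds by
   a factor q^eps, resp. p^eps, which exceeds any constant once q, resp. p, is large. *)

definition related_tuples :: "('a \<Rightarrow> 'a \<Rightarrow> bool) \<Rightarrow> 'a set \<Rightarrow> nat \<Rightarrow> (nat \<Rightarrow> 'a) set" where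
  "related_tuples rel E n = {x \<in> {..<n} \<rightarrow>\<^sub>E E. \<forall>i<n. \<forall>j<n. rel (x i) (x j)}"

lemma finite_related_tuples: "finite E \<Longrightarrow> finite (related_tuples rel E n)"
  unfolding related_tuples_def by (rule finite_subset[OF _ finite_PiE[of "{..<n}" "\<lambda>_. E"]]) auto

lemma related_tuples_Suc_subset:
  "related_tuples rel E (Suc n) \<subseteq>
     (\<lambda>(y, a). y(n := a)) ` (related_tuples rel E n \<times> (E \<inter> Z)) \<union>
     (\<Union>a\<in>E - Z. (\<lambda>y. y(n := a)) ` ({..<n} \<rightarrow>\<^sub>E {b \<in> E. rel a b}))"
proof
  fix x assume x: "x \<in> related_tuples rel E (Suc n)"
  define y where "y = x(n := undefined)"
  have x_eq: "x = y(n := x n)" by (simp add: y_def)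
  have "x n \<in> E" using x by (auto simp: related_tuples_def)
  have y_PiE: "y \<in> {..<n} \<rightarrow>\<^sub>E E" and y_rel: "\<forall>i<n. \<forall>j<n. rel (y i) (y j)"
    and y_last: "\<forall>i<n. rel (x n) (y i)"
    using x by (auto simp: related_tuples_def y_def PiE_def extensional_def)
  show "x \<in> (\<lambda>(y, a). y(n := a)) ` (related_tuples rel E n \<times> (E \<inter> Z)) \<union>
     (\<Union>a\<in>E - Z. (\<lambda>y. y(n := a)) ` ({..<n} \<rightarrow>\<^sub>E {b \<in> E. rel a b}))"
  proof (cases "x n \<in> Z")
    case True
    have "(y, x n) \<in> related_tuples rel E n \<times> (E \<inter> Z)"
      using y_PiE y_rel True \<open>x n \<in> E\<close> by (simp add: related_tuples_def)
    then show ?thesis using x_eq by (intro UnI1) (auto intro!: image_eqI[where x = "(y, x n)"])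
  next
    case False
    have "y \<in> {..<n} \<rightarrow>\<^sub>E {b \<in> E. rel (x n) b}" using y_PiE y_last by (auto simp: PiE_iff)
    then show ?thesis
      using x_eq False \<open>x n \<in> E\<close> by (intro UnI2) (auto intro!: image_eqI[where x = y])
  qed
qed

lemma card_related_tuples_Suc_le:
  assumes "finite E"
    and nbhd: "\<And>a. a \<in> E - Z \<Longrightarrow> card {b \<in> E. rel a b} \<le> B"
    and exceptional: "card (E \<inter> Z) \<le> B"
  shows "card (related_tuples rel E (Suc n)) \<le> card (related_tuples rel E n) * B + card E * B ^ n"
proof -
  let ?U1 = "(\<lambda>(y, a). y(n := a)) ` (related_tuples rel E n \<times> (E \<inter> Z))"
  let ?U2 = "\<Union>a\<in>E - Z. (\<lambda>y. y(n := a)) ` ({..<n} \<rightarrow>\<^sub>E {b \<in> E. rel a b})"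
  have "card ?U1 \<le> card (related_tuples rel E n \<times> (E \<inter> Z))"
    using \<open>finite E\<close> finite_related_tuples by (intro card_image_le) auto
  also have "\<dots> \<le> card (related_tuples rel E n) * B"
    using exceptional by (simp add: card_cartesian_product)
  finally have U1: "card ?U1 \<le> card (related_tuples rel E n) * B" .
  have "card ?U2 \<le> (\<Sum>a\<in>E - Z. card ((\<lambda>y. y(n := a)) ` ({..<n} \<rightarrow>\<^sub>E {b \<in> E. rel a b})))"
    using \<open>finite E\<close> by (intro card_UN_le) auto
  also have "\<dots> \<le> (\<Sum>a\<in>E - Z. card {b \<in> E. rel a b} ^ n)"
    using \<open>finite E\<close>
    by (intro sum_mono order.trans[OF card_image_le]) (auto simp: card_PiE intro: finite_PiE)
  also have "\<dots> \<le> (\<Sum>a\<in>E - Z. B ^ n)" using nbhd by (intro sum_mono power_mono) auto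
  also have "\<dots> \<le> card E * B ^ n" using \<open>finite E\<close> by (simp add: card_mono)
  finally have U2: "card ?U2 \<le> card E * B ^ n" .
  have "card (related_tuples rel E (Suc n)) \<le> card (?U1 \<union> ?U2)"
    using \<open>finite E\<close>
    by (intro card_mono[OF _ related_tuples_Suc_subset]) (auto intro!: finite_PiE finite_related_tuples)
  also have "\<dots> \<le> card ?U1 + card ?U2" by (rule card_Un_le)
  finally show ?thesis using U1 U2 by linarith
qed

lemma card_related_tuples_le:
  assumes "finite E"
    and "\<And>a. a \<in> E - Z \<Longrightarrow> card {b \<in> E. rel a b} \<le> B"
    and "card (E \<inter> Z) \<le> B"
  shows "card (related_tuples rel E (Suc n)) \<le> Suc n * card E * B ^ n"
proof (induction n)
  case 0
  have "card (related_tuples rel E (Suc 0)) \<le> card ({..<Suc 0} \<rightarrow>\<^sub>E E)"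
    using \<open>finite E\<close> by (intro card_mono) (auto simp: related_tuples_def intro!: finite_PiE)
  then show ?case by (simp add: card_PiE)
next
  case (Suc n)
  have "card (related_tuples rel E (Suc (Suc n)))
      \<le> card (related_tuples rel E (Suc n)) * B + card E * B ^ Suc n"
    using assms by (rule card_related_tuples_Suc_le)
  also have "\<dots> \<le> Suc n * card E * B ^ n * B + card E * B ^ Suc n"
    using Suc by (simp add: mult_right_mono)
  also have "\<dots> = Suc (Suc n) * card E * B ^ Suc n" by (simp add: algebra_simps)
  finally show ?case .
qed

lemma bad_tuples_eq_related_tuples:
  "bad_tuples R k E = related_tuples (\<lambda>a b. perp_dot R a b \<notin> Units R) E (Suc k)"
  unfolding bad_tuples_def related_tuples_def good_config_def
  by (simp add: lessThan_Suc_atMost less_Suc_eq_le)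

lemma bad_tuples_mono: "E \<subseteq> S \<Longrightarrow> bad_tuples R k E \<subseteq> bad_tuples R k S"
  unfolding bad_tuples_def by (auto simp: PiE_def Pi_def)

lemma (in ring) perp_dot_eq_zero_iff:
  assumes "a \<in> carrier R \<times> carrier R" "b \<in> carrier R \<times> carrier R"
  shows "perp_dot R a b = \<zero> \<longleftrightarrow> fst a \<otimes> snd b = snd a \<otimes> fst b"
  using assms by (auto simp: perp_dot_def)

lemma (in field) card_perp_dot_non_unit_le:
  assumes "finite (carrier R)" "a \<in> carrier R \<times> carrier R" "a \<noteq> (\<zero>, \<zero>)"
  shows "card {b \<in> carrier R \<times> carrier R. perp_dot R a b \<notin> Units R} \<le> card (carrier R)"
proof -
  obtain a1 a2 where a: "a = (a1, a2)" "a1 \<in> carrier R" "a2 \<in> carrier R"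
    using assms(2) by auto
  let ?L = "{b \<in> carrier R \<times> carrier R. a1 \<otimes> snd b = a2 \<otimes> fst b}"
  have "perp_dot R a b \<notin> Units R \<longleftrightarrow> a1 \<otimes> snd b = a2 \<otimes> fst b"
    if "b \<in> carrier R \<times> carrier R" for b
  proof -
    have "perp_dot R a b \<in> carrier R" using that a by (auto simp: perp_dot_def)
    then show ?thesis using perp_dot_eq_zero_iff[OF assms(2) that] a by (simp add: field_Units)
  qed
  then have L_eq: "{b \<in> carrier R \<times> carrier R. perp_dot R a b \<notin> Units R} = ?L" by blast
  have "card ?L \<le> card (carrier R)"
  proof (cases "a1 = \<zero>")
    case True
    then have "a2 \<noteq> \<zero>" using assms(3) a by auto
    then have fst_zero: "fst b = \<zero>" if "b \<in> ?L" for b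
      using that True a integral_iff[of a2 "fst b"] by auto
    have "inj_on snd ?L"
    proof (rule inj_onI)
      fix b c assume "b \<in> ?L" "c \<in> ?L" "snd b = snd c"
      then show "b = c" using fst_zero[OF \<open>b \<in> ?L\<close>] fst_zero[OF \<open>c \<in> ?L\<close>] by (simp add: prod_eq_iff)
    qed
    then show ?thesis using assms(1) by (intro card_inj_on_le) auto
  next
    case False
    have "inj_on fst ?L"
    proof (rule inj_onI)
      fix b c assume "b \<in> ?L" "c \<in> ?L" "fst b = fst c"
      then have "snd b = snd c" using m_lcancel[OF False a(2), of "snd b" "snd c"] by auto
      then show "b = c" using \<open>fst b = fst c\<close> by (simp add: prod_eq_iff)
    qed
    then show ?thesis using assms(1) by (intro card_inj_on_le) auto
  qed
  then show ?thesis using L_eq by simp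
qed

lemma card_bad_tuples_field_le:
  fixes F (structure)
  assumes "field F" "finite (carrier F)" "E \<subseteq> carrier F \<times> carrier F"
  shows "card (bad_tuples F k E) \<le> Suc k * card E * card (carrier F) ^ k"
proof -
  interpret field F by fact
  have "finite E" using assms(2,3) finite_subset by blast
  have "card (E \<inter> {(\<zero>, \<zero>)}) \<le> card {(\<zero>, \<zero>)}" by (rule card_mono) auto
  also have "\<dots> \<le> card (carrier F)"
    using assms(2) zero_closed by (auto simp: Suc_le_eq card_gt_0_iff)
  finally have exceptional: "card (E \<inter> {(\<zero>, \<zero>)}) \<le> card (carrier F)" .
  have nbhd: "card {b \<in> E. perp_dot F a b \<notin> Units F} \<le> card (carrier F)"
    if "a \<in> E - {(\<zero>, \<zero>)}" for a
  proof -
    have "card {b \<in> E. perp_dot F a b \<notin> Units F}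
        \<le> card {b \<in> carrier F \<times> carrier F. perp_dot F a b \<notin> Units F}"
      using assms(2,3) by (intro card_mono) auto
    also have "\<dots> \<le> card (carrier F)"
      using that assms(2,3) by (intro card_perp_dot_non_unit_le) auto
    finally show ?thesis .
  qed
  show ?thesis
    unfolding bad_tuples_eq_related_tuples
    using \<open>finite E\<close> nbhd exceptional by (rule card_related_tuples_le)
qed

lemma residue_ring_perp_dot:
  assumes "m > 1"
  shows "perp_dot (residue_ring m) a b = (fst a * snd b - snd a * fst b) mod m"
proof -
  interpret residues m "residue_ring m" using assms by (simp add: residues_def)
  show ?thesis
    by (simp add: perp_dot_def a_minus_def res_add_eq res_mult_eq res_neg_eq mod_simps)
qed

lemma residue_prime_power_Units:
  fixes p :: int
  assumes "Factorial_Ring.prime p" "l \<ge> 1"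
  shows "Units (residue_ring (p ^ l)) = {x \<in> {0..<p ^ l}. \<not> p dvd x}"
proof -
  have "p ^ l > 1" using assms prime_gt_1_int by simp
  interpret residues "p ^ l" "residue_ring (p ^ l)" using \<open>p ^ l > 1\<close> by (simp add: residues_def)
  have "coprime x (p ^ l) \<longleftrightarrow> \<not> p dvd x" for x
  proof -
    have "coprime x (p ^ l) \<longleftrightarrow> coprime x p" using assms(2) by simp
    also have "\<dots> \<longleftrightarrow> \<not> p dvd x"
      using assms(1)
      by (metis prime_imp_coprime_int coprime_commute not_prime_unit coprime_absorb_right)
    finally show ?thesis .
  qed
  then show ?thesis by (auto simp: res_units_eq le_less)
qed

lemma residue_prime_power_perp_dot_Units_iff:
  fixes p :: int
  assumes "Factorial_Ring.prime p" "l \<ge> 1"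
  shows "perp_dot (residue_ring (p ^ l)) a b \<in> Units (residue_ring (p ^ l))
     \<longleftrightarrow> \<not> p dvd fst a * snd b - snd a * fst b"
proof -
  have "p ^ l > 1" using assms prime_gt_1_int by simp
  moreover have "p dvd p ^ l" using assms(2) by (simp add: dvd_power)
  ultimately show ?thesis
    using assms by (simp add: residue_prime_power_Units residue_ring_perp_dot dvd_mod_iff)
qed

lemma card_le_if_snd_cong:
  fixes S :: "(int \<times> int) set" and m n q :: nat
  assumes "S \<subseteq> {0..<int m} \<times> {0..<int (q * n)}"
    and "\<And>b c. b \<in> S \<Longrightarrow> c \<in> S \<Longrightarrow> fst b = fst c \<Longrightarrow> [snd b = snd c] (mod int q)"
  shows "card S \<le> m * n"
proof -
  let ?f = "\<lambda>b. (fst b, snd b div int q)"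
  have "inj_on ?f S"
  proof (rule inj_onI)
    fix b c assume b: "b \<in> S" and c: "c \<in> S" and eq: "?f b = ?f c"
    have "snd b = snd b div int q * int q + snd b mod int q" by simp
    also have "\<dots> = snd c div int q * int q + snd c mod int q"
      using assms(2)[OF b c] eq by (simp add: cong_def)
    also have "\<dots> = snd c" by simp
    finally show "b = c" using eq by (simp add: prod_eq_iff)
  qed
  moreover have "?f b \<in> {0..<int m} \<times> {0..<int n}" if "b \<in> S" for b
  proof -
    have "fst b \<in> {0..<int m}" "0 \<le> snd b" "snd b < int q * int n"
      using that assms(1) by auto
    moreover have "snd b div int q < int n"
      using \<open>0 \<le> snd b\<close> \<open>snd b < int q * int n\<close>
      by (smt (verit, best) div_mult2_eq' of_nat_less_0_iff zdiv_eq_0_iff)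
    ultimately show ?thesis by (simp add: div_int_pos_iff)
  qed
  ultimately have "card S \<le> card ({0..<int m} \<times> {0..<int n})"
    by (intro card_inj_on_le) auto
  then show ?thesis by (simp add: card_cartesian_product)
qed

lemma power_pred_mult:
  fixes p :: "'a :: monoid_mult" and l :: nat
  assumes "l \<ge> 1"
  shows "p * p ^ (l - 1) = p ^ l" "p ^ l * p ^ (l - 1) = p ^ (2 * l - 1)"
proof -
  have "Suc (l - 1) = l" "l + (l - 1) = 2 * l - 1" using assms by simp_all
  then show "p * p ^ (l - 1) = p ^ l" "p ^ l * p ^ (l - 1) = p ^ (2 * l - 1)"
    by (metis power_Suc, metis power_add)
qed

lemma card_prime_power_square_le_if_snd_cong:
  fixes S :: "(int \<times> int) set" and p l :: nat
  assumes "l \<ge> 1" "S \<subseteq> {0..<int p ^ l} \<times> {0..<int p ^ l}"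
    and "\<And>b c. b \<in> S \<Longrightarrow> c \<in> S \<Longrightarrow> fst b = fst c \<Longrightarrow> [snd b = snd c] (mod int p)"
  shows "card S \<le> p ^ (2 * l - 1)"
proof -
  have p_pow: "p * p ^ (l - 1) = p ^ l" "p ^ l * p ^ (l - 1) = p ^ (2 * l - 1)"
    using power_pred_mult[OF assms(1)] .
  have "S \<subseteq> {0..<int (p ^ l)} \<times> {0..<int (p * p ^ (l - 1))}"
    unfolding p_pow(1) using assms(2) by simp
  then have "card S \<le> p ^ l * p ^ (l - 1)" using assms(3) by (rule card_le_if_snd_cong)
  then show ?thesis by (simp only: p_pow(2))
qed

lemma card_dvd_det_le_of_not_dvd_fst:
  fixes p l :: nat and a :: "int \<times> int"
  assumes "Factorial_Ring.prime p" "l \<ge> 1" "\<not> int p dvd fst a"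
  shows "card {b \<in> {0..<int p ^ l} \<times> {0..<int p ^ l}. int p dvd fst a * snd b - snd a * fst b}
    \<le> p ^ (2 * l - 1)" (is "card ?L \<le> _")
proof (rule card_prime_power_square_le_if_snd_cong[OF assms(2)])
  show "?L \<subseteq> {0..<int p ^ l} \<times> {0..<int p ^ l}" by auto
next
  fix b c assume "b \<in> ?L" "c \<in> ?L" "fst b = fst c"
  then have "int p dvd fst a * snd b - snd a * fst b" "int p dvd fst a * snd c - snd a * fst c"
    by auto
  then have "int p dvd (fst a * snd b - snd a * fst b) - (fst a * snd c - snd a * fst c)"
    by (rule dvd_diff)
  also have "(fst a * snd b - snd a * fst b) - (fst a * snd c - snd a * fst c)
      = fst a * (snd b - snd c)"
    using \<open>fst b = fst c\<close> by (simp add: algebra_simps)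
  finally have "int p dvd snd b - snd c"
    using assms(1,3) by (simp add: prime_dvd_mult_iff)
  then show "[snd b = snd c] (mod int p)" by (simp add: cong_iff_dvd_diff)
qed

lemma card_dvd_det_le:
  fixes p l :: nat and a :: "int \<times> int"
  assumes "Factorial_Ring.prime p" "l \<ge> 1" "\<not> (int p dvd fst a \<and> int p dvd snd a)"
  shows "card {b \<in> {0..<int p ^ l} \<times> {0..<int p ^ l}. int p dvd fst a * snd b - snd a * fst b}
    \<le> p ^ (2 * l - 1)"
proof (cases "int p dvd fst a")
  case False
  with assms(1,2) show ?thesis by (rule card_dvd_det_le_of_not_dvd_fst)
next
  case True
  let ?L = "\<lambda>a :: int \<times> int.
    {b \<in> {0..<int p ^ l} \<times> {0..<int p ^ l}. int p dvd fst a * snd b - snd a * fst b}"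
  have mem: "b \<in> ?L a \<longleftrightarrow> prod.swap b \<in> ?L (prod.swap a)" for b
    by (cases a; cases b) (auto simp: dvd_diff_commute mult.commute)
  have "?L a = prod.swap ` ?L (prod.swap a)"
  proof (intro equalityI subsetI)
    show "b \<in> prod.swap ` ?L (prod.swap a)" if "b \<in> ?L a" for b
      using that mem[of b] by (intro image_eqI[where x = "prod.swap b"]) simp_all
    show "b \<in> ?L a" if "b \<in> prod.swap ` ?L (prod.swap a)" for b
      using that mem by auto
  qed
  then have "card (?L a) = card (?L (prod.swap a))" by (simp add: card_image)
  also have "\<dots> \<le> p ^ (2 * l - 1)"
    using True assms by (intro card_dvd_det_le_of_not_dvd_fst) auto
  finally show ?thesis .
qed

lemma card_dvd_both_le:
  fixes p l :: nat
  assumes "l \<ge> 1"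
  shows "card {b \<in> {0..<int p ^ l} \<times> {0..<int p ^ l}. int p dvd fst b \<and> int p dvd snd b}
    \<le> p ^ (2 * l - 1)"
  using assms by (rule card_prime_power_square_le_if_snd_cong)
    (auto simp: cong_iff_dvd_diff intro: dvd_diff)

lemma card_bad_tuples_residue_le:
  fixes p l :: nat
  assumes "Factorial_Ring.prime p" "l \<ge> 1"
  shows "card (bad_tuples (residue_ring (int p ^ l)) k
      (carrier (residue_ring (int p ^ l)) \<times> carrier (residue_ring (int p ^ l))))
    \<le> Suc k * p ^ ((2 * l - 1) * (k + 1) + 1)"
proof -
  let ?R = "residue_ring (int p ^ l)"
  let ?S = "{0..<int p ^ l} \<times> {0..<int p ^ l}"
  let ?rel = "\<lambda>a b :: int \<times> int. int p dvd fst a * snd b - snd a * fst b"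
  let ?Z = "{a :: int \<times> int. int p dvd fst a \<and> int p dvd snd a}"
  have "carrier ?R \<times> carrier ?R = ?S" by (auto simp: residue_ring_def)
  moreover have "(\<lambda>a b. perp_dot ?R a b \<notin> Units ?R) = ?rel"
    using assms by (simp add: residue_prime_power_perp_dot_Units_iff)
  ultimately have bad_eq:
    "bad_tuples ?R k (carrier ?R \<times> carrier ?R) = related_tuples ?rel ?S (Suc k)"
    by (simp add: bad_tuples_eq_related_tuples)
  have "?S \<inter> ?Z = {b \<in> ?S. int p dvd fst b \<and> int p dvd snd b}" by auto
  then have exceptional: "card (?S \<inter> ?Z) \<le> p ^ (2 * l - 1)"
    using card_dvd_both_le[OF assms(2)] by simp
  have nbhd: "card {b \<in> ?S. ?rel a b} \<le> p ^ (2 * l - 1)" if "a \<in> ?S - ?Z" for a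
    using that card_dvd_det_le[OF assms, of a] by simp
  have "finite ?S" by simp
  then have "card (related_tuples ?rel ?S (Suc k)) \<le> Suc k * card ?S * (p ^ (2 * l - 1)) ^ k"
    using nbhd exceptional by (rule card_related_tuples_le)
  also have "card ?S = p ^ l * p ^ l" by (simp add: card_cartesian_product flip: of_nat_power)
  also have "Suc k * (p ^ l * p ^ l) * (p ^ (2 * l - 1)) ^ k
      = Suc k * p ^ ((2 * l - 1) * (k + 1) + 1)"
  proof -
    have "(2 * l - 1) * (k + 1) + 1 = l + l + (2 * l - 1) * k"
      using assms(2) by (cases l) (simp_all add: algebra_simps)
    then show ?thesis by (simp only: power_add power_mult mult.assoc)
  qed
  finally show ?thesis using bad_eq by simp
qed

lemma threshold_powr_le_power:
  fixes K c \<delta> \<epsilon> :: real and n :: nat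
  assumes "n > 0" "\<epsilon> > 0" "c > 0" "\<delta> > 0"
  obtains Q :: nat where
    "\<And>a y x. Q \<le> y \<Longrightarrow> c * real y powr (a + \<epsilon>) \<le> x \<Longrightarrow> K * real y powr (real n * a) \<le> \<delta> * x ^ n"
proof -
  define M where "M = max 1 (K / (\<delta> * c ^ n))"
  define Q where "Q = nat \<lceil>M powr (1 / (real n * \<epsilon>))\<rceil>"
  have "M \<ge> 1" by (simp add: M_def)
  have K_le: "K \<le> \<delta> * c ^ n * M"
  proof -
    have "K / (\<delta> * c ^ n) \<le> M" by (simp add: M_def)
    then show ?thesis using assms by (simp add: pos_divide_le_eq mult.commute)
  qed
  have "K * real y powr (real n * a) \<le> \<delta> * x ^ n"
    if "Q \<le> y" "c * real y powr (a + \<epsilon>) \<le> x" for a y x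
  proof -
    have "M powr (1 / (real n * \<epsilon>)) \<le> real y"
      using that(1) real_nat_ceiling_ge[of "M powr (1 / (real n * \<epsilon>))"] unfolding Q_def by linarith
    moreover have "M powr (1 / (real n * \<epsilon>)) > 0" using \<open>M \<ge> 1\<close> by simp
    ultimately have "real y > 0" by linarith
    have "M = (M powr (1 / (real n * \<epsilon>))) powr (real n * \<epsilon>)"
      using \<open>M \<ge> 1\<close> assms by (simp add: powr_powr)
    also have "\<dots> \<le> real y powr (real n * \<epsilon>)"
      using \<open>M powr (1 / (real n * \<epsilon>)) \<le> real y\<close> assms by (intro powr_mono2) auto
    finally have M_le: "M \<le> real y powr (real n * \<epsilon>)" .
    have "K * real y powr (real n * a) \<le> \<delta> * c ^ n * M * real y powr (real n * a)"
      using K_le by (intro mult_right_mono) auto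
    also have "\<dots> \<le> \<delta> * c ^ n * real y powr (real n * \<epsilon>) * real y powr (real n * a)"
      using M_le assms by (intro mult_right_mono mult_left_mono) auto
    also have "\<dots> = \<delta> * (c * real y powr (a + \<epsilon>)) ^ n"
      using \<open>real y > 0\<close> by (simp add: power_mult_distrib powr_power distrib_left powr_add mult_ac)
    also have "\<dots> \<le> \<delta> * x ^ n"
      using that(2) assms by (intro mult_left_mono power_mono) auto
    finally show ?thesis .
  qed
  then show ?thesis by (rule that)
qed

lemma bad_tuples_field_negligible:
  fixes k :: nat and \<epsilon> c \<delta> :: real
  assumes "k \<ge> 1" "\<epsilon> > 0" "c > 0" "\<delta> > 0"
  shows "\<exists>Q::nat. \<forall>(F :: 'a ring) E.
    field F \<longrightarrow> finite (carrier F) \<longrightarrow> card (carrier F) \<ge> Q \<longrightarrow>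
    E \<subseteq> carrier F \<times> carrier F \<longrightarrow>
    real (card E) \<ge> c * real (card (carrier F)) powr (1 + \<epsilon>) \<longrightarrow>
    real (card (bad_tuples F k E)) \<le> \<delta> * real (card E) ^ (k + 1)"
proof -
  obtain Q :: nat where Q: "\<And>a y x. Q \<le> y \<Longrightarrow> c * real y powr (a + \<epsilon>) \<le> x \<Longrightarrow>
      real (Suc k) * real y powr (real k * a) \<le> \<delta> * x ^ k"
    using threshold_powr_le_power[of k \<epsilon> c \<delta>] assms by auto
  have "real (card (bad_tuples F k E)) \<le> \<delta> * real (card E) ^ (k + 1)"
    if F: "field F" "finite (carrier F)" "E \<subseteq> carrier F \<times> carrier F"
      and large: "Q \<le> card (carrier F)" "c * real (card (carrier F)) powr (1 + \<epsilon>) \<le> real (card E)"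
    for F :: "'a ring" and E
  proof -
    interpret field F by (rule F(1))
    let ?q = "card (carrier F)"
    have "?q > 0" using F(2) card_gt_0_iff zero_closed by blast
    have "real (card (bad_tuples F k E)) \<le> real (Suc k * card E * ?q ^ k)"
      using card_bad_tuples_field_le[OF F] by (rule of_nat_mono)
    also have "\<dots> = real (Suc k) * real ?q ^ k * real (card E)"
      by (simp only: of_nat_mult of_nat_power mult_ac)
    also have "\<dots> \<le> \<delta> * real (card E) ^ k * real (card E)"
      using Q[OF large] \<open>?q > 0\<close> by (intro mult_right_mono) (simp_all add: powr_realpow)
    finally show ?thesis by (simp add: mult_ac)
  qed
  then show ?thesis by blast
qed

lemma bad_tuples_residue_negligible:
  fixes k :: nat and \<epsilon> c \<delta> :: real
  assumes "\<epsilon> > 0" "c > 0" "\<delta> > 0"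
  shows "\<exists>P::nat. \<forall>(p::nat) (l::nat) E.
    Factorial_Ring.prime p \<longrightarrow> l \<ge> 1 \<longrightarrow> p \<ge> P \<longrightarrow>
    (let R = residue_ring (int p ^ l) in
      E \<subseteq> carrier R \<times> carrier R \<longrightarrow>
      real (card E) \<ge> c * real p powr (2 * real l - 1 + 1 / (real k + 1) + \<epsilon>) \<longrightarrow>
      real (card (bad_tuples R k E)) \<le> \<delta> * real (card E) ^ (k + 1))"
proof -
  obtain P :: nat where P: "\<And>a y x. P \<le> y \<Longrightarrow> c * real y powr (a + \<epsilon>) \<le> x \<Longrightarrow>
      real (Suc k) * real y powr (real (k + 1) * a) \<le> \<delta> * x ^ (k + 1)"
    using threshold_powr_le_power[of "k + 1" \<epsilon> c \<delta>] assms by auto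
  have "real (card (bad_tuples R k E)) \<le> \<delta> * real (card E) ^ (k + 1)"
    if p: "Factorial_Ring.prime p" "l \<ge> 1" and R: "R = residue_ring (int p ^ l)"
      and E: "E \<subseteq> carrier R \<times> carrier R"
      and large: "P \<le> p" "c * real p powr (2 * real l - 1 + 1 / (real k + 1) + \<epsilon>) \<le> real (card E)"
    for p l :: nat and R E
  proof -
    let ?N = "(2 * l - 1) * (k + 1) + 1"
    have "finite (carrier R \<times> carrier R)" by (simp add: R residue_ring_def)
    then have "card (bad_tuples R k E) \<le> card (bad_tuples R k (carrier R \<times> carrier R))"
      using E by (intro card_mono bad_tuples_mono)
        (simp_all add: bad_tuples_eq_related_tuples finite_related_tuples)
    also have "\<dots> \<le> Suc k * p ^ ?N" using card_bad_tuples_residue_le[OF p] by (simp add: R)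
    finally have "real (card (bad_tuples R k E)) \<le> real (Suc k * p ^ ?N)"
      by (rule of_nat_mono)
    also have "\<dots> = real (Suc k) * real p ^ ?N" by (simp only: of_nat_mult of_nat_power)
    also have "real p ^ ?N = real p powr (real (k + 1) * (2 * real l - 1 + 1 / (real k + 1)))"
    proof -
      have exponent: "real (k + 1) * (2 * real l - 1 + 1 / (real k + 1)) = real ?N"
        using p(2) by (simp add: of_nat_diff field_simps)
      have "real p powr real ?N = real p ^ ?N"
        using p(1) prime_gt_0_nat by (intro powr_realpow) simp
      then show ?thesis unfolding exponent by (rule sym)
    qed
    also have "real (Suc k) * \<dots> \<le> \<delta> * real (card E) ^ (k + 1)" using P[OF large] .
    finally show ?thesis .
  qed
  then show ?thesis unfolding Let_def by blast
qed

theorem lemma2p5: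
  fixes k :: nat
  assumes "k \<ge> 1"
  shows
    \<comment> \<open>(i) finite fields F_q (modelled as finite HOL-Algebra fields with carrier in nat)\<close>
    "(\<exists>C::real. \<forall>(F :: nat ring) E.
        field F \<longrightarrow> finite (carrier F) \<longrightarrow> E \<subseteq> carrier F \<times> carrier F \<longrightarrow>
        real (card (bad_tuples F k E)) \<le> C * real (card (carrier F)) ^ k * real (card E))
   \<and> (\<forall>\<epsilon>::real. \<forall>c::real. \<forall>\<delta>::real. \<epsilon> > 0 \<longrightarrow> c > 0 \<longrightarrow> \<delta> > 0 \<longrightarrow>
        (\<exists>Q::nat. \<forall>(F :: nat ring) E.
          field F \<longrightarrow> finite (carrier F) \<longrightarrow> card (carrier F) \<ge> Q \<longrightarrow>
          E \<subseteq> carrier F \<times> carrier F \<longrightarrow>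
          real (card E) \<ge> c * real (card (carrier F)) powr (1 + \<epsilon>) \<longrightarrow>
          real (card (bad_tuples F k E)) \<le> \<delta> * real (card E) ^ (k + 1)))
   \<and> \<comment> \<open>(ii) R = Z/p^l Z\<close>
     (\<exists>C::real. \<forall>(p::nat) (l::nat).
        Factorial_Ring.prime p \<longrightarrow> l \<ge> 1 \<longrightarrow>
        (let R = residue_ring (int p ^ l) in
          real (card (bad_tuples R k (carrier R \<times> carrier R)))
            \<le> C * real p ^ ((2 * l - 1) * (k + 1) + 1)))
   \<and> (\<forall>\<epsilon>::real. \<forall>c::real. \<forall>\<delta>::real. \<epsilon> > 0 \<longrightarrow> c > 0 \<longrightarrow> \<delta> > 0 \<longrightarrow>
        (\<exists>P::nat. \<forall>(p::nat) (l::nat) E.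
          Factorial_Ring.prime p \<longrightarrow> l \<ge> 1 \<longrightarrow> p \<ge> P \<longrightarrow>
          (let R = residue_ring (int p ^ l) in
            E \<subseteq> carrier R \<times> carrier R \<longrightarrow>
            real (card E) \<ge> c * real p powr (2 * real l - 1 + 1 / (real k + 1) + \<epsilon>) \<longrightarrow>
            real (card (bad_tuples R k E)) \<le> \<delta> * real (card E) ^ (k + 1))))"
proof -
  have field_bound: "real (card (bad_tuples F k E))
      \<le> real (Suc k) * real (card (carrier F)) ^ k * real (card E)"
    if "field F" "finite (carrier F)" "E \<subseteq> carrier F \<times> carrier F" for F :: "nat ring" and E
  proof -
    have "real (card (bad_tuples F k E)) \<le> real (Suc k * card E * card (carrier F) ^ k)"
      using card_bad_tuples_field_le[OF that] by (rule of_nat_mono)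
    then show ?thesis by (simp only: of_nat_mult of_nat_power mult_ac)
  qed
  have residue_bound: "real (card (bad_tuples R k (carrier R \<times> carrier R)))
      \<le> real (Suc k) * real p ^ ((2 * l - 1) * (k + 1) + 1)"
    if "Factorial_Ring.prime p" "l \<ge> 1" "R = residue_ring (int p ^ l)" for p l :: nat and R
  proof -
    have "real (card (bad_tuples R k (carrier R \<times> carrier R)))
        \<le> real (Suc k * p ^ ((2 * l - 1) * (k + 1) + 1))"
      using card_bad_tuples_residue_le[OF that(1,2)] that(3) by (intro of_nat_mono) simp
    then show ?thesis by (simp only: of_nat_mult of_nat_power)
  qed
  show ?thesis
    using field_bound residue_bound bad_tuples_field_negligible[OF assms]
      bad_tuples_residue_negligible[of _ _ _ k]
    unfolding Let_def by blast
qed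

end
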